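(* Let $G$ be a 2-tree on $n$ vertices with a fixed construction sequence, and let $v_1,\ldots,v_n$ be an ordering of $V(G)$ such that the graph obtained from $G$ by adding the edges $v_kv_{k+1}$ ($1\le k<n$) and $v_nv_1$ that are not already present has a plane embedding in which $(v_1,\ldots,v_n)$ is a one-sided Hamiltonian cycle with special edge $v_nv_1$. Let $e=ab$ be an edge of $G$ with $|X_L(e)|\ge 2$, and let $x$ be the element of $X_L(e)$ with the largest index. Let $e_1=xa$ and $e_2=xb$ be the two edges of $S(e)$ incident with $x$. Then $X_R(e_1)=X_R(e_2)=\emptyset$, and $|X_L(e_1)|\le 1$ or $|X_L(e_2)|\le 1$.
   Context: A 2-tree is built from $K_3$ by repeatedly stacking a new vertex over an existing edge $xy$ (making it adjacent exactly to $x$ and $y$); fix such a construction sequence. For an edge $e$, $X(e)$ is the set of vertices stacked over $e$ in this sequence, and $S(e)$ is the set of edges created by these stackings (each joins an endpoint of $e$ to a vertex of $X(e)$). For $e=v_iv_j$ with $i<j$: $X_L(e)=\{v_k\in X(e): k<i\}$, $X_M(e)=\{v_k\in X(e): i<k<j\}$, $X_R(e)=\{v_k\in X(e): k>j\}$. One-sided Hamiltonian cycle: a plane graph on $n\ge3$ vertices has one with special edge $v_nv_1$ if $(v_1,\ldots,v_n)$ is a Hamiltonian cycle, $v_nv_1$ is on the outer face, and, with $D$ the closed bounded region bounded by the cycle, for every $j\in\{2,\ldots,n\}$ the non-cycle edges joining $v_j$ to some $v_i$ with $i<j$ are all in the interior of $D$ or all in the exterior of $D$. *)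

theory Defs
  imports "HOL-Analysis.Analysis"
begin

text \<open>A construction sequence is a base triangle (t1,t2,t3) together with a list of
stacking steps (w, x, y): the new vertex w is stacked over the existing edge {x,y}.
Edges are represented as 2-element vertex sets.\<close>

definition cs_verts :: "'v \<times> 'v \<times> 'v \<Rightarrow> ('v \<times> 'v \<times> 'v) list \<Rightarrow> nat \<Rightarrow> 'v set" where
  "cs_verts T st k = (case T of (t1,t2,t3) \<Rightarrow> {t1,t2,t3} \<union> {fst (st!i) | i. i < k})"

definition cs_edges :: "'v \<times> 'v \<times> 'v \<Rightarrow> ('v \<times> 'v \<times> 'v) list \<Rightarrow> nat \<Rightarrow> 'v set set" where
  "cs_edges T st k = (case T of (t1,t2,t3) \<Rightarrow>
     {{t1,t2},{t2,t3},{t1,t3}} \<union>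
     {{fst (st!i), fst (snd (st!i))} | i. i < k} \<union>
     {{fst (st!i), snd (snd (st!i))} | i. i < k})"

definition valid_cs :: "'v \<times> 'v \<times> 'v \<Rightarrow> ('v \<times> 'v \<times> 'v) list \<Rightarrow> bool" where
  "valid_cs T st \<longleftrightarrow> (case T of (t1,t2,t3) \<Rightarrow> t1 \<noteq> t2 \<and> t2 \<noteq> t3 \<and> t1 \<noteq> t3) \<and>
     (\<forall>i < length st. fst (st!i) \<notin> cs_verts T st i \<and>
        {fst (snd (st!i)), snd (snd (st!i))} \<in> cs_edges T st i)"

abbreviation tree_verts where "tree_verts T st \<equiv> cs_verts T st (length st)"
abbreviation tree_edges where "tree_edges T st \<equiv> cs_edges T st (length st)"

definition stackedX :: "('v \<times> 'v \<times> 'v) list \<Rightarrow> 'v set \<Rightarrow> 'v set" where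
  "stackedX st e = {fst (st!i) | i. i < length st \<and> {fst (snd (st!i)), snd (snd (st!i))} = e}"

definition vidx :: "(nat \<Rightarrow> 'v) \<Rightarrow> nat \<Rightarrow> 'v \<Rightarrow> nat" where
  "vidx v n u = inv_into {1..n} v u"

definition XL :: "('v \<times> 'v \<times> 'v) list \<Rightarrow> (nat \<Rightarrow> 'v) \<Rightarrow> nat \<Rightarrow> 'v set \<Rightarrow> 'v set" where
  "XL st v n e = {w \<in> stackedX st e. \<forall>u\<in>e. vidx v n w < vidx v n u}"

definition XM :: "('v \<times> 'v \<times> 'v) list \<Rightarrow> (nat \<Rightarrow> 'v) \<Rightarrow> nat \<Rightarrow> 'v set \<Rightarrow> 'v set" where
  "XM st v n e = {w \<in> stackedX st e. (\<exists>u\<in>e. vidx v n u < vidx v n w) \<and> (\<exists>u\<in>e. vidx v n w < vidx v n u)}"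

definition XR :: "('v \<times> 'v \<times> 'v) list \<Rightarrow> (nat \<Rightarrow> 'v) \<Rightarrow> nat \<Rightarrow> 'v set \<Rightarrow> 'v set" where
  "XR st v n e = {w \<in> stackedX st e. \<forall>u\<in>e. vidx v n u < vidx v n w}"

definition plane_embedding ::
  "'v set \<Rightarrow> 'v set set \<Rightarrow> ('v \<Rightarrow> complex) \<Rightarrow> ('v set \<Rightarrow> real \<Rightarrow> complex) \<Rightarrow> bool" where
  "plane_embedding V E p \<gamma> \<longleftrightarrow> inj_on p V \<and>
     (\<forall>e\<in>E. arc (\<gamma> e) \<and> {pathstart (\<gamma> e), pathfinish (\<gamma> e)} = p ` e) \<and>
     (\<forall>e\<in>E. \<forall>u\<in>V. p u \<in> path_image (\<gamma> e) \<longrightarrow> u \<in> e) \<and>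
     (\<forall>e\<in>E. \<forall>f\<in>E. e \<noteq> f \<longrightarrow> path_image (\<gamma> e) \<inter> path_image (\<gamma> f) \<subseteq> p ` (e \<inter> f))"

definition cycle_edges :: "(nat \<Rightarrow> 'v) \<Rightarrow> nat \<Rightarrow> 'v set set" where
  "cycle_edges v n = {{v k, v (Suc k)} | k. 1 \<le> k \<and> k < n} \<union> {{v n, v 1}}"

text \<open>The closed region D is the cycle curve
together with its inside; the interior of D is the inside of the curve, the exterior
of D is its outside. The outer face is the unbounded component of the complement of
the drawing.\<close>
definition one_sided_ham ::
  "'v set \<Rightarrow> 'v set set \<Rightarrow> ('v \<Rightarrow> complex) \<Rightarrow> ('v set \<Rightarrow> real \<Rightarrow> complex) \<Rightarrow> (nat \<Rightarrow> 'v) \<Rightarrow> nat \<Rightarrow> bool" where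
  "one_sided_ham V E p \<gamma> v n \<longleftrightarrow>
     n \<ge> 3 \<and> bij_betw v {1..n} V \<and> cycle_edges v n \<subseteq> E \<and>
     path_image (\<gamma> {v n, v 1}) \<subseteq> closure (outside (\<Union>e\<in>E. path_image (\<gamma> e))) \<and>
     (let C = (\<Union>e\<in>cycle_edges v n. path_image (\<gamma> e)) in
      \<forall>j\<in>{2..n}.
        let N = {e \<in> E - cycle_edges v n. \<exists>i. 1 \<le> i \<and> i < j \<and> e = {v i, v j}} in
        (\<forall>e\<in>N. path_image (\<gamma> e) - p ` e \<subseteq> inside C) \<or>
        (\<forall>e\<in>N. path_image (\<gamma> e) - p ` e \<subseteq> outside C))"

end

theory Submission
  imports Defs
begin

text \<open>Every edge off the Hamiltonian cycle C is drawn inside or outside C, subject to two rules.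
Edges \<open>v\<^sub>iv\<^sub>j\<close> and \<open>v\<^sub>rv\<^sub>s\<close> whose ends interleave along C lie on opposite sides: on a common
side the first one cuts that region of C in two, and the second, which joins the two arcs of C
between \<open>v\<^sub>i\<close> and \<open>v\<^sub>j\<close>, would connect the two parts (Jordan curve theorem and Janiszewski's
theorem). By one-sidedness, the edges joining a vertex to earlier vertices all lie on one side.
Let y and x be stacked over ab, y before x. A vertex stacked over xa or xb to the right of x and
of that end, or two vertices stacked to the left over each of xa and xb, produce edges whose
sides are related by these rules around an odd cycle, which is impossible.\<close>

section \<open>Chords of a Jordan curve\<close>

lemma arc_tail_connected_component:
  fixes g :: "real \<Rightarrow> 'a::topological_space"
  assumes g: "arc g" "path_image g \<inter> K \<subseteq> {pathstart g}"
    and W: "connected W" "W \<inter> K = {}" "pathfinish g \<in> closure W" "w \<in> W"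
  shows "connected_component (- K) (g (1/2)) w"
  unfolding connected_component_def
proof (intro exI conjI)
  let ?D = "g ` {1/2..1} \<union> insert (pathfinish g) W"
  have "continuous_on {1/2..1} g"
    using arc_imp_path[OF g(1)] unfolding path_def by (rule continuous_on_subset) auto
  moreover have "connected (insert (pathfinish g) W)"
    by (rule connected_intermediate_closure[OF W(1)]) (use W(3) closure_subset in auto)
  moreover have "pathfinish g \<in> g ` {1/2..1}"
    unfolding pathfinish_def by auto
  ultimately show "connected ?D"
    by (intro connected_Un connected_continuous_image connected_Icc) auto
  have "g t \<notin> K" if "t \<in> {1/2..1}" for t
  proof
    assume "g t \<in> K"
    moreover have "g t \<in> path_image g"
      using that by (auto simp: path_image_def)
    ultimately have "g t = g 0"
      using g(2) unfolding pathstart_def by blast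
    thus False
      using arc_imp_inj_on[OF g(1)] that unfolding inj_on_def by force
  qed
  thus "?D \<subseteq> - K"
    using W(2) unfolding pathfinish_def by auto
qed (use W(4) in auto)

lemma arc_across_chord_connected_component:
  fixes c g :: "real \<Rightarrow> complex"
  assumes AB: "compact A" "compact B" "A \<inter> B \<subseteq> path_image c"
    and c: "path c"
    and g: "arc g" "pathstart g \<notin> B" "pathfinish g \<notin> A"
      "path_image g \<inter> path_image c = {}"
      "path_image g \<inter> (A \<union> B) \<subseteq> {pathstart g, pathfinish g}"
    and W: "connected W" "W \<inter> (A \<union> B \<union> path_image c) = {}"
      "pathstart g \<in> closure W" "pathfinish g \<in> closure W" "w \<in> W"
  shows "connected_component (- (A \<union> B)) (g (1/2)) w"
proof -
  have cA: "connected_component (- (path_image c \<union> A)) (g (1/2)) w"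
    using g W by (intro arc_tail_connected_component) auto
  have "connected_component (- (path_image c \<union> B)) (reversepath g (1/2)) w"
    using g W by (intro arc_tail_connected_component) (auto simp: arc_reversepath)
  hence cB: "connected_component (- (path_image c \<union> B)) (g (1/2)) w"
    by (simp add: reversepath_def)
  have "(path_image c \<union> A) \<inter> (path_image c \<union> B) = path_image c"
    using AB(3) by blast
  hence "connected ((path_image c \<union> A) \<inter> (path_image c \<union> B))"
    using c by (simp add: connected_path_image)
  \<comment> \<open>\<open>c \<union> A\<close> and \<open>c \<union> B\<close> each miss a half of g, and they meet in the connected set c\<close>
  with AB c have "connected_component (- ((path_image c \<union> A) \<union> (path_image c \<union> B))) (g (1/2)) w"
    by (intro Janiszewski[OF _ _ _ cA cB]) (auto intro: compact_imp_closed compact_path_image)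
  thus ?thesis
    by (rule connected_component_of_subset) blast
qed

lemma arc_with_ends:
  assumes "arc g" "{pathstart g, pathfinish g} = {a, b}"
  obtains h where "arc h" "pathstart h = a" "pathfinish h = b" "path_image h = path_image g"
proof (cases "pathstart g = a")
  case True
  with assms have "pathfinish g = b"
    using arc_distinct_ends by (metis doubleton_eq_iff)
  with True assms(1) that show ?thesis by blast
next
  case False
  with assms have "pathstart g = b" "pathfinish g = a"
    by (metis doubleton_eq_iff)+
  with assms(1) that[of "reversepath g"] show ?thesis by (simp add: arc_reversepath)
qed

lemma arc_chain:
  fixes g :: "nat \<Rightarrow> real \<Rightarrow> 'a::topological_space"
  assumes "i < j"
    and arcs: "\<And>k. i \<le> k \<Longrightarrow> k < j \<Longrightarrow>
      arc (g k) \<and> pathstart (g k) = q k \<and> pathfinish (g k) = q (Suc k)"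
    and meet: "\<And>k l. i \<le> k \<Longrightarrow> k < l \<Longrightarrow> l < j \<Longrightarrow> path_image (g k) \<inter> path_image (g l) \<subseteq> {q l}"
  shows "\<exists>c. arc c \<and> pathstart c = q i \<and> pathfinish c = q j \<and>
    path_image c = (\<Union>k\<in>{i..<j}. path_image (g k))"
  using assms
proof (induction j)
  case 0
  thus ?case by simp
next
  case (Suc j)
  show ?case
  proof (cases "i = j")
    case True
    thus ?thesis using Suc.prems(2)[of i] by auto
  next
    case False
    then obtain c where c: "arc c" "pathstart c = q i" "pathfinish c = q j"
      "path_image c = (\<Union>k\<in>{i..<j}. path_image (g k))"
      using Suc by fastforce
    have gj: "arc (g j)" "pathstart (g j) = q j" "pathfinish (g j) = q (Suc j)"
      using Suc.prems(2)[of j] False Suc.prems(1) by auto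
    have "path_image c \<inter> path_image (g j) \<subseteq> {pathstart (g j)}"
      using Suc.prems(3)[of _ j] gj(2) unfolding c(4) by fastforce
    hence "arc (c +++ g j)"
      using c gj by (intro arc_join) auto
    moreover have "{i..<Suc j} = insert j {i..<j}"
      using Suc.prems(1) by auto
    ultimately show ?thesis
      using c gj by (intro exI[of _ "c +++ g j"]) (auto simp: path_image_join)
  qed
qed

lemma Jordan_curve_chords_cross:
  fixes J c g :: "real \<Rightarrow> complex"
  assumes J: "simple_path J" "pathfinish J = pathstart J" "path_image J = A \<union> B"
    and AB: "compact A" "compact B" "A \<inter> B \<subseteq> path_image c"
    and c: "path c" "path_image c \<subseteq> U \<union> path_image J"
    and g: "arc g" "pathstart g \<in> A - B" "pathfinish g \<in> B - A"
      "path_image g \<inter> path_image c = {}"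
      "path_image g \<inter> path_image J \<subseteq> {pathstart g, pathfinish g}"
      "path_image g - {pathstart g, pathfinish g} \<subseteq> U"
    and U: "U \<in> {inside (path_image J), outside (path_image J)}"
  shows False
proof -
  let ?C = "path_image J"
  have JIO: "inside ?C \<noteq> {}" "connected (inside ?C)" "outside ?C \<noteq> {}" "connected (outside ?C)"
    "?C \<subseteq> closure (inside ?C)" "?C \<subseteq> closure (outside ?C)"
    using Jordan_inside_outside[OF J(1,2)] unfolding frontier_def by auto
  define W where "W = (if U = inside ?C then outside ?C else inside ?C)"
  have "W \<noteq> {} \<and> connected W \<and> ?C \<subseteq> closure W \<and> W \<inter> ?C = {} \<and> U \<inter> W = {}"
    using JIO U inside_Int_outside[of ?C] unfolding W_def by (auto simp del: inside_Int_outside)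
  hence regions: "W \<noteq> {}" "connected W" "?C \<subseteq> closure W" "W \<inter> ?C = {}" "U \<inter> W = {}"
    by blast+
  then obtain w where w: "w \<in> W" by blast
  have "g (1/2) \<noteq> pathstart g" "g (1/2) \<noteq> pathfinish g"
    using arc_imp_inj_on[OF g(1)] unfolding inj_on_def pathstart_def pathfinish_def by force+
  hence u: "g (1/2) \<in> U"
    using g(6) by (auto simp: path_image_def)
  have "connected_component (- (A \<union> B)) (g (1/2)) w"
    using AB c g J(3) regions w by (intro arc_across_chord_connected_component) auto
  hence cc: "connected_component (- ?C) (g (1/2)) w"
    using J(3) by simp
  have "w \<in> U"
    using U u inside_same_component[OF cc] outside_same_component[OF cc] by blast
  thus False
    using regions(5) w by blast
qed

section \<open>Drawings with a one-sided Hamiltonian cycle\<close>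

locale one_sided_drawing =
  fixes V :: "'v set" and E :: "'v set set" and p :: "'v \<Rightarrow> complex"
    and \<gamma> :: "'v set \<Rightarrow> real \<Rightarrow> complex" and v :: "nat \<Rightarrow> 'v" and n :: nat
  assumes plane: "plane_embedding V E p \<gamma>" and one_sided: "one_sided_ham V E p \<gamma> v n"
begin

lemma n_ge_3: "n \<ge> 3"
  and v_bij: "bij_betw v {1..n} V"
  and cycle_edges_subset: "cycle_edges v n \<subseteq> E"
  using one_sided by (simp_all add: one_sided_ham_def)

lemma edge_arc: "e \<in> E \<Longrightarrow> arc (\<gamma> e)"
  using plane by (simp add: plane_embedding_def)

lemma edge_arc_ends: "e \<in> E \<Longrightarrow> {pathstart (\<gamma> e), pathfinish (\<gamma> e)} = p ` e"
  using plane by (simp add: plane_embedding_def)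

lemma edge_arc_vertex: "e \<in> E \<Longrightarrow> u \<in> V \<Longrightarrow> p u \<in> path_image (\<gamma> e) \<Longrightarrow> u \<in> e"
  using plane by (simp add: plane_embedding_def)

lemma edge_arcs_meet:
  "e \<in> E \<Longrightarrow> f \<in> E \<Longrightarrow> e \<noteq> f \<Longrightarrow> path_image (\<gamma> e) \<inter> path_image (\<gamma> f) \<subseteq> p ` (e \<inter> f)"
  using plane unfolding plane_embedding_def by blast

lemma endpoint_on_edge_arc:
  assumes "e \<in> E" "u \<in> e"
  shows "p u \<in> path_image (\<gamma> e)"
proof -
  have "p u \<in> {pathstart (\<gamma> e), pathfinish (\<gamma> e)}"
    using edge_arc_ends[OF assms(1)] assms(2) by blast
  thus ?thesis by auto
qed

lemma on_edge_arc_iff: "e \<in> E \<Longrightarrow> u \<in> V \<Longrightarrow> p u \<in> path_image (\<gamma> e) \<longleftrightarrow> u \<in> e"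
  using edge_arc_vertex endpoint_on_edge_arc by blast

lemma edge_arc_from_to:
  assumes "{u, w} \<in> E"
  obtains h where "arc h" "pathstart h = p u" "pathfinish h = p w"
    "path_image h = path_image (\<gamma> {u, w})"
  by (rule arc_with_ends[OF edge_arc[OF assms]]) (use edge_arc_ends[OF assms] in auto)

lemma v_in_V: "i \<in> {1..n} \<Longrightarrow> v i \<in> V"
  using v_bij bij_betwE by blast

lemma v_eq_iff: "i \<in> {1..n} \<Longrightarrow> j \<in> {1..n} \<Longrightarrow> v i = v j \<longleftrightarrow> i = j"
  using v_bij by (metis bij_betw_imp_inj_on inj_on_eq_iff)

abbreviation idx :: "'v \<Rightarrow> nat" where "idx \<equiv> vidx v n"

lemma v_idx: "u \<in> V \<Longrightarrow> idx u \<in> {1..n} \<and> v (idx u) = u"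
  unfolding vidx_def using v_bij
  by (metis bij_betw_def bij_betw_inv_into_right inv_into_into)

lemma idx_eq_iff: "u \<in> V \<Longrightarrow> w \<in> V \<Longrightarrow> idx u = idx w \<longleftrightarrow> u = w"
  using v_idx by metis

definition cyc_next :: "nat \<Rightarrow> nat" where "cyc_next k = (if k < n then Suc k else 1)"
definition cyc_edge :: "nat \<Rightarrow> 'v set" where "cyc_edge k = {v k, v (cyc_next k)}"
definition cycle_image :: "complex set" where
  "cycle_image = (\<Union>e\<in>cycle_edges v n. path_image (\<gamma> e))"

lemma cycle_edges_eq: "cycle_edges v n = cyc_edge ` {1..n}"
proof -
  have "{n} \<union> {1..<n} = {1..n}"
    using n_ge_3 by auto
  hence "cyc_edge ` {1..n} = {cyc_edge n} \<union> cyc_edge ` {1..<n}"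
    by (metis image_Un image_insert image_empty)
  thus ?thesis
    unfolding cycle_edges_def cyc_edge_def cyc_next_def by (auto simp: insert_commute)
qed

lemma cyc_edge_in_E: "k \<in> {1..n} \<Longrightarrow> cyc_edge k \<in> E"
  using cycle_edges_eq cycle_edges_subset by blast

lemma cyc_next_range: "k \<in> {1..n} \<Longrightarrow> cyc_next k \<in> {1..n}"
  using n_ge_3 by (auto simp: cyc_next_def)

lemma v_in_cyc_edge_iff:
  "k \<in> {1..n} \<Longrightarrow> m \<in> {1..n} \<Longrightarrow> v m \<in> cyc_edge k \<longleftrightarrow> m = k \<or> m = cyc_next k"
  using v_eq_iff cyc_next_range unfolding cyc_edge_def by blast

lemma v_on_cycle_arcs_iff:
  assumes "K \<subseteq> {1..n}" "m \<in> {1..n}"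
  shows "p (v m) \<in> (\<Union>k\<in>K. path_image (\<gamma> (cyc_edge k))) \<longleftrightarrow> (\<exists>k\<in>K. m = k \<or> m = cyc_next k)"
  using assms on_edge_arc_iff[OF cyc_edge_in_E v_in_V] v_in_cyc_edge_iff by blast

lemma cyc_edge_inj:
  assumes "k \<in> {1..n}" "l \<in> {1..n}" "cyc_edge k = cyc_edge l"
  shows "k = l"
proof -
  have "v k \<in> cyc_edge l" "v (cyc_next k) \<in> cyc_edge l"
    using assms(3) by (auto simp: cyc_edge_def)
  hence "k = l \<or> k = cyc_next l" "cyc_next k = l \<or> cyc_next k = cyc_next l"
    using v_in_cyc_edge_iff assms(1,2) cyc_next_range by blast+
  thus ?thesis
    using assms(1,2) n_ge_3 unfolding cyc_next_def by (auto split: if_splits)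
qed

lemma cycle_arcs_meet:
  assumes "k \<in> {1..n}" "l \<in> {1..n}" "k \<noteq> l" "z \<in> path_image (\<gamma> (cyc_edge k))" "z \<in> path_image (\<gamma> (cyc_edge l))"
  shows "\<exists>m. z = p (v m) \<and> (m = k \<or> m = cyc_next k) \<and> (m = l \<or> m = cyc_next l)"
proof -
  have "cyc_edge k \<noteq> cyc_edge l"
    using cyc_edge_inj assms(1-3) by blast
  then obtain u where "u \<in> cyc_edge k" "u \<in> cyc_edge l" "z = p u"
    using edge_arcs_meet[OF cyc_edge_in_E cyc_edge_in_E] assms by blast
  thus ?thesis
    using assms(1,2) v_in_cyc_edge_iff cyc_next_range unfolding cyc_edge_def by blast
qed

lemma cycle_path_arc:
  obtains c where "arc c" "pathstart c = p (v 1)" "pathfinish c = p (v n)"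
    "path_image c = (\<Union>k\<in>{1..<n}. path_image (\<gamma> (cyc_edge k)))"
proof -
  have "\<forall>k\<in>{1..<n}. \<exists>h. arc h \<and> pathstart h = p (v k) \<and> pathfinish h = p (v (Suc k)) \<and>
      path_image h = path_image (\<gamma> (cyc_edge k))"
  proof
    fix k assume "k \<in> {1..<n}"
    hence "{v k, v (Suc k)} \<in> E" "cyc_edge k = {v k, v (Suc k)}"
      using cyc_edge_in_E[of k] by (auto simp: cyc_edge_def cyc_next_def)
    thus "\<exists>h. arc h \<and> pathstart h = p (v k) \<and> pathfinish h = p (v (Suc k)) \<and>
        path_image h = path_image (\<gamma> (cyc_edge k))"
      by (metis edge_arc_from_to)
  qed
  then obtain g where g: "\<And>k. k \<in> {1..<n} \<Longrightarrow> arc (g k) \<and> pathstart (g k) = p (v k) \<and>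
      pathfinish (g k) = p (v (Suc k)) \<and> path_image (g k) = path_image (\<gamma> (cyc_edge k))"
    by metis
  have "path_image (g k) \<inter> path_image (g l) \<subseteq> {p (v l)}" if kl: "1 \<le> k" "k < l" "l < n" for k l
  proof
    fix z assume "z \<in> path_image (g k) \<inter> path_image (g l)"
    hence "z \<in> path_image (\<gamma> (cyc_edge k))" "z \<in> path_image (\<gamma> (cyc_edge l))"
      using g[of k] g[of l] kl by auto
    then obtain m where "z = p (v m)" "m = k \<or> m = cyc_next k" "m = l \<or> m = cyc_next l"
      using cycle_arcs_meet[of k l z] kl by auto
    thus "z \<in> {p (v l)}"
      using kl by (auto simp: cyc_next_def)
  qed
  thus ?thesis
    using arc_chain[of 1 n g "p \<circ> v"] g n_ge_3 that by auto
qed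

lemma cycle_Jordan_curve:
  obtains J where "simple_path J" "pathfinish J = pathstart J" "path_image J = cycle_image"
proof -
  obtain c where c: "arc c" "pathstart c = p (v 1)" "pathfinish c = p (v n)"
      "path_image c = (\<Union>k\<in>{1..<n}. path_image (\<gamma> (cyc_edge k)))"
    by (rule cycle_path_arc)
  have "{v n, v 1} \<in> E" "cyc_edge n = {v n, v 1}"
    using cyc_edge_in_E[of n] n_ge_3 by (auto simp: cyc_edge_def cyc_next_def)
  then obtain h where h: "arc h" "pathstart h = p (v n)" "pathfinish h = p (v 1)"
      "path_image h = path_image (\<gamma> (cyc_edge n))"
    by (metis edge_arc_from_to)
  have "path_image c \<inter> path_image h \<subseteq> {pathstart c, pathstart h}"
  proof
    fix z assume "z \<in> path_image c \<inter> path_image h"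
    then obtain k where "k \<in> {1..<n}" "z \<in> path_image (\<gamma> (cyc_edge k))" "z \<in> path_image (\<gamma> (cyc_edge n))"
      using c(4) h(4) by auto
    then obtain m where "z = p (v m)" "m = n \<or> m = cyc_next n"
      using cycle_arcs_meet[of k n z] by auto
    thus "z \<in> {pathstart c, pathstart h}"
      using c h by (auto simp: cyc_next_def)
  qed
  hence "simple_path (c +++ h)"
    using c h by (intro simple_path_join_loop) auto
  moreover have "path_image (c +++ h) = cycle_image"
  proof -
    have "{1..n} = insert n {1..<n}"
      using n_ge_3 by auto
    thus ?thesis
      using c h unfolding cycle_image_def cycle_edges_eq by (auto simp: path_image_join)
  qed
  ultimately show ?thesis
    using that c h by auto
qed

lemma chord_not_cycle_edge:
  assumes "1 \<le> i" "Suc i < j" "j \<le> n" "\<not> (i = 1 \<and> j = n)"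
  shows "{v i, v j} \<notin> cycle_edges v n"
proof
  assume "{v i, v j} \<in> cycle_edges v n"
  then obtain k where k: "k \<in> {1..n}" "{v i, v j} = cyc_edge k"
    unfolding cycle_edges_eq by blast
  hence "i = k \<or> i = cyc_next k" "j = k \<or> j = cyc_next k"
    using v_in_cyc_edge_iff[of k i] v_in_cyc_edge_iff[of k j] assms by auto
  thus False
    using assms k(1) by (auto simp: cyc_next_def split: if_splits)
qed

lemma interleaved_chords_not_cycle_edges:
  assumes "1 \<le> i" "i < r" "r < j" "j \<le> n" "s \<in> {1..n}" "s < i \<or> j < s"
  shows "{v i, v j} \<notin> cycle_edges v n" "{v r, v s} \<notin> cycle_edges v n"
proof -
  show "{v i, v j} \<notin> cycle_edges v n"
    using assms by (intro chord_not_cycle_edge) auto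
  show "{v r, v s} \<notin> cycle_edges v n"
    using assms(6)
  proof
    assume "s < i"
    hence "{v s, v r} \<notin> cycle_edges v n"
      using assms by (intro chord_not_cycle_edge) auto
    thus ?thesis by (simp add: insert_commute)
  next
    assume "j < s"
    thus ?thesis
      using assms by (intro chord_not_cycle_edge) auto
  qed
qed

lemma non_cycle_edge_meets_cycle:
  assumes "e \<in> E - cycle_edges v n"
  shows "path_image (\<gamma> e) \<inter> cycle_image \<subseteq> p ` e"
proof
  fix z assume "z \<in> path_image (\<gamma> e) \<inter> cycle_image"
  then obtain f where "f \<in> cycle_edges v n" "z \<in> path_image (\<gamma> e)" "z \<in> path_image (\<gamma> f)"
    unfolding cycle_image_def by blast
  thus "z \<in> p ` e"
    using edge_arcs_meet[of e f] assms cycle_edges_subset by blast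
qed

lemma cycle_arcs_split_meet:
  assumes "1 \<le> i" "i < j" "j \<le> n"
  shows "(\<Union>k\<in>{i..<j}. path_image (\<gamma> (cyc_edge k))) \<inter>
    (\<Union>k\<in>{1..n} - {i..<j}. path_image (\<gamma> (cyc_edge k))) \<subseteq> p ` {v i, v j}"
proof
  fix z assume "z \<in> (\<Union>k\<in>{i..<j}. path_image (\<gamma> (cyc_edge k))) \<inter>
    (\<Union>k\<in>{1..n} - {i..<j}. path_image (\<gamma> (cyc_edge k)))"
  then obtain k l where kl: "k \<in> {i..<j}" "l \<in> {1..n} - {i..<j}"
    "z \<in> path_image (\<gamma> (cyc_edge k))" "z \<in> path_image (\<gamma> (cyc_edge l))"
    by blast
  moreover have "k \<in> {1..n}" "l \<in> {1..n}" "k \<noteq> l"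
    using kl(1,2) assms by auto
  ultimately obtain m where "z = p (v m)" "m = k \<or> m = cyc_next k" "m = l \<or> m = cyc_next l"
    using cycle_arcs_meet by blast
  moreover have "m = i \<or> m = j"
    using kl(1,2) calculation(2,3) assms by (auto simp: cyc_next_def split: if_splits)
  ultimately show "z \<in> p ` {v i, v j}" by auto
qed

lemma interleaved_chords_not_same_region:
  assumes ij: "1 \<le> i" "i < r" "r < j" "j \<le> n" "s \<in> {1..n}" "s < i \<or> j < s"
    and E: "{v i, v j} \<in> E" "{v r, v s} \<in> E"
    and U: "U \<in> {inside cycle_image, outside cycle_image}"
    and chord1: "path_image (\<gamma> {v i, v j}) - p ` {v i, v j} \<subseteq> U"
    and chord2: "path_image (\<gamma> {v r, v s}) - p ` {v r, v s} \<subseteq> U"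
  shows False
proof -
  obtain J where J: "simple_path J" "pathfinish J = pathstart J" "path_image J = cycle_image"
    by (rule cycle_Jordan_curve)
  define A where "A = (\<Union>k\<in>{i..<j}. path_image (\<gamma> (cyc_edge k)))"
  define B where "B = (\<Union>k\<in>{1..n} - {i..<j}. path_image (\<gamma> (cyc_edge k)))"
  \<comment> \<open>the two arcs of the cycle between \<open>v\<^sub>i\<close> and \<open>v\<^sub>j\<close>; \<open>v\<^sub>r\<close> lies on A and \<open>v\<^sub>s\<close> on B\<close>
  have range: "i \<in> {1..n}" "j \<in> {1..n}" "r \<in> {1..n}" "{i..<j} \<subseteq> {1..n}"
    using ij by auto
  have compact: "compact A" "compact B"
    unfolding A_def B_def using range(4)
    by (auto intro!: compact_UN compact_path_image arc_imp_path edge_arc cyc_edge_in_E)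
  have "A \<union> B = (\<Union>k\<in>{1..n}. path_image (\<gamma> (cyc_edge k)))"
    unfolding A_def B_def using range(4) by blast
  hence AB: "path_image J = A \<union> B"
    using J(3) unfolding cycle_image_def cycle_edges_eq by simp
  have "A \<inter> B \<subseteq> p ` {v i, v j}"
    unfolding A_def B_def using cycle_arcs_split_meet ij by simp
  also have "\<dots> \<subseteq> path_image (\<gamma> {v i, v j})"
    using endpoint_on_edge_arc[OF E(1)] by blast
  finally have AB_meet: "A \<inter> B \<subseteq> path_image (\<gamma> {v i, v j})" .
  have ends_on_J: "p ` {v i, v j} \<subseteq> path_image J"
    using v_on_cycle_arcs_iff[of "{1..n}" i] v_on_cycle_arcs_iff[of "{1..n}" j] range AB
    unfolding A_def B_def by blast
  obtain g where g: "arc g" "pathstart g = p (v r)" "pathfinish g = p (v s)"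
      "path_image g = path_image (\<gamma> {v r, v s})"
    by (rule edge_arc_from_to[OF E(2)])
  have "p (v r) \<in> A - B" "p (v s) \<in> B - A"
    unfolding A_def B_def using v_on_cycle_arcs_iff range ij
    by (auto simp: cyc_next_def split: if_splits)
  moreover have "{v i, v j} \<inter> {v r, v s} = {}"
    using v_eq_iff range ij by auto
  hence "path_image g \<inter> path_image (\<gamma> {v i, v j}) = {}"
    using edge_arcs_meet[OF E(2,1)] g(4) by auto
  moreover have "path_image g \<inter> path_image J \<subseteq> {pathstart g, pathfinish g}"
    using non_cycle_edge_meets_cycle[of "{v r, v s}"] interleaved_chords_not_cycle_edges(2)[OF ij]
      E(2) g J(3) by auto
  ultimately show False
    using Jordan_curve_chords_cross[OF J(1,2) AB compact AB_meet _ _ g(1), of U] U J(3)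
      arc_imp_path[OF edge_arc[OF E(1)]] chord1 chord2 ends_on_J g
    by auto
qed

definition drawn_inside :: "'v set \<Rightarrow> bool" where
  "drawn_inside e \<longleftrightarrow> path_image (\<gamma> e) - p ` e \<subseteq> inside cycle_image"

definition drawn_outside :: "'v set \<Rightarrow> bool" where
  "drawn_outside e \<longleftrightarrow> path_image (\<gamma> e) - p ` e \<subseteq> outside cycle_image"

lemma not_drawn_inside_and_outside:
  assumes "e \<in> E"
  shows "\<not> (drawn_inside e \<and> drawn_outside e)"
proof -
  have a: "arc (\<gamma> e)"
    using edge_arc[OF assms] .
  have "\<gamma> e (1/2) \<noteq> pathstart (\<gamma> e)" "\<gamma> e (1/2) \<noteq> pathfinish (\<gamma> e)"
    using arc_imp_inj_on[OF a] unfolding inj_on_def pathstart_def pathfinish_def by force+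
  hence "\<gamma> e (1/2) \<in> path_image (\<gamma> e) - p ` e"
    using edge_arc_ends[OF assms] by (auto simp: path_image_def)
  thus ?thesis
    using inside_Int_outside[of cycle_image] unfolding drawn_inside_def drawn_outside_def by blast
qed

lemma drawn_on_same_side_at_later_end:
  assumes "u \<in> V" "u' \<in> V" "w \<in> V" "idx u < idx w" "idx u' < idx w"
    and "{u, w} \<in> E - cycle_edges v n" "{u', w} \<in> E - cycle_edges v n"
  shows "(drawn_inside {u, w} \<and> drawn_inside {u', w}) \<or> (drawn_outside {u, w} \<and> drawn_outside {u', w})"
proof -
  let ?N = "{e \<in> E - cycle_edges v n. \<exists>i. 1 \<le> i \<and> i < idx w \<and> e = {v i, v (idx w)}}"
  have w: "idx w \<in> {2..n}"
    using v_idx assms by fastforce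
  have "{u, w} \<in> ?N" "{u', w} \<in> ?N"
    using assms v_idx by (metis (mono_tags, lifting) atLeastAtMost_iff mem_Collect_eq)+
  moreover have "(\<forall>e\<in>?N. drawn_inside e) \<or> (\<forall>e\<in>?N. drawn_outside e)"
    using one_sided w
    unfolding one_sided_ham_def Let_def drawn_inside_def drawn_outside_def cycle_image_def by blast
  ultimately show ?thesis by blast
qed

lemma drawn_outside_iff:
  assumes "u \<in> V" "w \<in> V" "u \<noteq> w" "{u, w} \<in> E - cycle_edges v n"
  shows "drawn_outside {u, w} \<longleftrightarrow> \<not> drawn_inside {u, w}"
proof -
  have "idx u < idx w \<or> idx w < idx u"
    using idx_eq_iff assms(1-3) by (meson linorder_neqE_nat)
  hence "drawn_inside {u, w} \<or> drawn_outside {u, w}"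
    using drawn_on_same_side_at_later_end[of u u w] drawn_on_same_side_at_later_end[of w w u]
      assms by (auto simp: insert_commute)
  thus ?thesis
    using not_drawn_inside_and_outside assms(4) by blast
qed

lemma drawn_inside_at_later_end:
  assumes "u \<in> V" "u' \<in> V" "w \<in> V" "idx u < idx w" "idx u' < idx w"
    and "{u, w} \<in> E - cycle_edges v n" "{u', w} \<in> E - cycle_edges v n"
  shows "drawn_inside {u, w} \<longleftrightarrow> drawn_inside {u', w}"
  using drawn_on_same_side_at_later_end[OF assms] not_drawn_inside_and_outside assms(6,7) by blast

lemma interleaved_edges_not_cycle_edges:
  assumes "u \<in> V" "w \<in> V" "r \<in> V" "s \<in> V"
    and "idx u < idx r" "idx r < idx w" "idx s < idx u \<or> idx w < idx s"
  shows "{u, w} \<notin> cycle_edges v n" "{r, s} \<notin> cycle_edges v n"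
  using interleaved_chords_not_cycle_edges[of "idx u" "idx r" "idx w" "idx s"] v_idx assms by auto

lemma drawn_inside_interleaved:
  assumes V: "u \<in> V" "w \<in> V" "r \<in> V" "s \<in> V"
    and order: "idx u < idx r" "idx r < idx w" "idx s < idx u \<or> idx w < idx s"
    and E: "{u, w} \<in> E" "{r, s} \<in> E"
  shows "drawn_inside {u, w} \<longleftrightarrow> \<not> drawn_inside {r, s}"
proof -
  have ix: "idx u \<in> {1..n}" "idx w \<in> {1..n}" "idx r \<in> {1..n}" "idx s \<in> {1..n}"
    "v (idx u) = u" "v (idx w) = w" "v (idx r) = r" "v (idx s) = s"
    using v_idx V by auto
  have "\<not> (U \<in> {inside cycle_image, outside cycle_image} \<and>
      path_image (\<gamma> {u, w}) - p ` {u, w} \<subseteq> U \<and> path_image (\<gamma> {r, s}) - p ` {r, s} \<subseteq> U)" for U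
    using interleaved_chords_not_same_region[of "idx u" "idx r" "idx w" "idx s" U] ix order E by auto
  moreover have "u \<noteq> w" "r \<noteq> s"
    using order by auto
  ultimately show ?thesis
    using drawn_outside_iff[of u w] drawn_outside_iff[of r s] interleaved_edges_not_cycle_edges[OF V order] V E
    unfolding drawn_inside_def drawn_outside_def by blast
qed

text \<open>In the next two lemmas y and x are stacked over ab, y before x. Each case chains the
rules \<open>drawn_inside_interleaved\<close> and \<open>drawn_inside_at_later_end\<close> around an odd cycle of edges.\<close>

lemma two_stackings_no_right_neighbour:
  assumes V: "a \<in> V" "b \<in> V" "x \<in> V" "y \<in> V" "z \<in> V"
    and order: "idx y < idx x" "idx x < idx a" "idx x < idx b" "idx a < idx z" "a \<noteq> b" "z \<noteq> b"
    and E: "{y, a} \<in> E" "{y, b} \<in> E" "{x, a} \<in> E" "{x, b} \<in> E" "{a, b} \<in> E"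
      "{x, z} \<in> E" "{a, z} \<in> E"
  shows False
proof (cases "idx a < idx b")
  case True
  have ya_xb: "drawn_inside {y, a} \<longleftrightarrow> \<not> drawn_inside {x, b}"
    using drawn_inside_interleaved[of y a x b] V order E True by auto
  have ya_xz: "drawn_inside {y, a} \<longleftrightarrow> \<not> drawn_inside {x, z}"
    using drawn_inside_interleaved[of y a x z] V order E by auto
  have noncycle: "{x, b} \<notin> cycle_edges v n" "{x, z} \<notin> cycle_edges v n"
    using interleaved_edges_not_cycle_edges[of y a x b] interleaved_edges_not_cycle_edges[of y a x z]
      V order True by auto
  show False
  proof (cases "idx z < idx b")
    case True
    have "drawn_inside {x, z} \<longleftrightarrow> \<not> drawn_inside {a, b}"
      using drawn_inside_interleaved[of x z a b] V order E True by auto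
    moreover have "drawn_inside {a, b} \<longleftrightarrow> drawn_inside {x, b}"
      using drawn_inside_at_later_end[of a x b] interleaved_edges_not_cycle_edges[of x z a b]
        noncycle V order E True \<open>idx a < idx b\<close> by auto
    ultimately show False
      using ya_xb ya_xz by blast
  next
    case False
    hence "idx b < idx z"
      using idx_eq_iff V order by (metis linorder_neqE_nat)
    hence "drawn_inside {x, b} \<longleftrightarrow> \<not> drawn_inside {a, z}"
      and "{a, z} \<notin> cycle_edges v n"
      using drawn_inside_interleaved[of x b a z] interleaved_edges_not_cycle_edges[of x b a z]
        V order E \<open>idx a < idx b\<close> by auto
    moreover have "drawn_inside {a, z} \<longleftrightarrow> drawn_inside {x, z}"
      using drawn_inside_at_later_end[of a x z] calculation(2) noncycle V order E by auto
    ultimately show False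
      using ya_xb ya_xz by blast
  qed
next
  case False
  hence ba: "idx b < idx a"
    using idx_eq_iff V order by (metis linorder_neqE_nat)
  have "drawn_inside {y, b} \<longleftrightarrow> \<not> drawn_inside {x, a}"
    and "drawn_inside {y, b} \<longleftrightarrow> \<not> drawn_inside {x, z}"
    and "drawn_inside {y, a} \<longleftrightarrow> \<not> drawn_inside {x, z}"
    using drawn_inside_interleaved[of y b x a] drawn_inside_interleaved[of y b x z]
      drawn_inside_interleaved[of y a x z] V order E ba by auto
  moreover have "drawn_inside {y, a} \<longleftrightarrow> drawn_inside {x, a}"
    using drawn_inside_at_later_end[of y x a] interleaved_edges_not_cycle_edges[of y b x a]
      interleaved_edges_not_cycle_edges[of y a x z] V order E ba by auto
  ultimately show False
    by blast
qed

lemma two_stackings_no_two_left_pairs: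
  assumes V: "a \<in> V" "b \<in> V" "x \<in> V" "y \<in> V" "z1 \<in> V" "z2 \<in> V" "w1 \<in> V" "w2 \<in> V"
    and order: "idx y < idx x" "idx x < idx a" "idx x < idx b" "a \<noteq> b"
      "idx z1 < idx z2" "idx z2 < idx x" "idx w1 < idx w2" "idx w2 < idx x"
    and E: "{y, a} \<in> E" "{y, b} \<in> E" "{x, a} \<in> E" "{x, b} \<in> E"
      "{z1, x} \<in> E" "{z2, a} \<in> E" "{w1, x} \<in> E" "{w2, b} \<in> E"
  shows False
proof -
  have z_a: "drawn_inside {z1, x} \<longleftrightarrow> \<not> drawn_inside {z2, a}"
    and w_b: "drawn_inside {w1, x} \<longleftrightarrow> \<not> drawn_inside {w2, b}"
    using drawn_inside_interleaved[of z1 x z2 a] drawn_inside_interleaved[of w1 x w2 b]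
      V order E by auto
  have noncycle: "{z1, x} \<notin> cycle_edges v n" "{z2, a} \<notin> cycle_edges v n"
      "{w1, x} \<notin> cycle_edges v n" "{w2, b} \<notin> cycle_edges v n"
    using interleaved_edges_not_cycle_edges[of z1 x z2 a] interleaved_edges_not_cycle_edges[of w1 x w2 b]
      V order by auto
  have z_w: "drawn_inside {z1, x} \<longleftrightarrow> drawn_inside {w1, x}"
    using drawn_inside_at_later_end[of z1 w1 x] noncycle V order E by auto
  show False
  proof (cases "idx a < idx b")
    case True
    have "drawn_inside {y, a} \<longleftrightarrow> \<not> drawn_inside {x, b}"
      and "{y, a} \<notin> cycle_edges v n" "{x, b} \<notin> cycle_edges v n"
      using drawn_inside_interleaved[of y a x b] interleaved_edges_not_cycle_edges[of y a x b]
        V order E True by auto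
    moreover have "drawn_inside {z2, a} \<longleftrightarrow> drawn_inside {y, a}"
      using drawn_inside_at_later_end[of z2 y a] calculation(2) noncycle V order E by auto
    moreover have "drawn_inside {w2, b} \<longleftrightarrow> drawn_inside {x, b}"
      using drawn_inside_at_later_end[of w2 x b] calculation(3) noncycle V order E by auto
    ultimately show False
      using z_a w_b z_w by blast
  next
    case False
    hence ba: "idx b < idx a"
      using idx_eq_iff V order by (metis linorder_neqE_nat)
    have "drawn_inside {y, b} \<longleftrightarrow> \<not> drawn_inside {x, a}"
      and "{y, b} \<notin> cycle_edges v n" "{x, a} \<notin> cycle_edges v n"
      using drawn_inside_interleaved[of y b x a] interleaved_edges_not_cycle_edges[of y b x a]
        V order E ba by auto
    moreover have "drawn_inside {z2, a} \<longleftrightarrow> drawn_inside {x, a}"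
      using drawn_inside_at_later_end[of z2 x a] calculation(3) noncycle V order E by auto
    moreover have "drawn_inside {w2, b} \<longleftrightarrow> drawn_inside {y, b}"
      using drawn_inside_at_later_end[of w2 y b] calculation(2) noncycle V order E by auto
    ultimately show False
      using z_a w_b z_w by blast
  qed
qed

end

section \<open>Construction sequences\<close>

lemma Collect_less_Suc: "{f i | i. i < Suc k} = insert (f k) {f i | i. i < k}"
  using less_Suc_eq by blast

lemma cs_verts_Suc: "cs_verts T st (Suc k) = insert (fst (st!k)) (cs_verts T st k)"
  by (cases T) (simp add: cs_verts_def Collect_less_Suc[of "\<lambda>i. fst (st!i)"] insert_commute)

lemma cs_edges_Suc: "cs_edges T st (Suc k) =
    insert {fst (st!k), fst (snd (st!k))} (insert {fst (st!k), snd (snd (st!k))} (cs_edges T st k))"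
  by (cases T) (simp add: cs_edges_def Collect_less_Suc[of "\<lambda>i. {fst (st!i), fst (snd (st!i))}"]
      Collect_less_Suc[of "\<lambda>i. {fst (st!i), snd (snd (st!i))}"] insert_commute Un_ac)

lemma cs_verts_mono: "k \<le> l \<Longrightarrow> cs_verts T st k \<subseteq> cs_verts T st l"
  by (cases T) (auto simp: cs_verts_def)

lemma cs_edge_endpoints:
  assumes "valid_cs T st" "k \<le> length st" "e \<in> cs_edges T st k"
  shows "\<exists>a b. a \<noteq> b \<and> e = {a, b} \<and> a \<in> cs_verts T st k \<and> b \<in> cs_verts T st k"
  using assms(2,3)
proof (induction k arbitrary: e)
  case 0
  thus ?case
    using assms(1) by (cases T) (auto simp: valid_cs_def cs_edges_def cs_verts_def)
next
  case (Suc k)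
  let ?w = "fst (st!k)" and ?x = "fst (snd (st!k))" and ?y = "snd (snd (st!k))"
  have new: "?w \<notin> cs_verts T st k" and base: "{?x, ?y} \<in> cs_edges T st k"
    using assms(1) Suc.prems(1) by (auto simp: valid_cs_def)
  have old: "?x \<in> cs_verts T st k" "?y \<in> cs_verts T st k"
    using Suc.IH[OF _ base] Suc.prems(1) by (auto simp: doubleton_eq_iff)
  consider "e \<in> cs_edges T st k" | "e = {?w, ?x}" | "e = {?w, ?y}"
    using Suc.prems(2) unfolding cs_edges_Suc by blast
  thus ?case
  proof cases
    case 1
    thus ?thesis
      using Suc.IH[of e] Suc.prems(1) unfolding cs_verts_Suc by fastforce
  next
    case 2
    thus ?thesis
      using old new by (intro exI[of _ ?w] exI[of _ ?x]) (auto simp: cs_verts_Suc)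
  next
    case 3
    thus ?thesis
      using old new by (intro exI[of _ ?w] exI[of _ ?y]) (auto simp: cs_verts_Suc)
  qed
qed

lemma stackedX_step:
  assumes "valid_cs T st" "w \<in> stackedX st e"
  obtains i where "i < length st" "w \<notin> cs_verts T st i" "e \<in> cs_edges T st i"
proof -
  obtain i where i: "i < length st" "w = fst (st!i)" "{fst (snd (st!i)), snd (snd (st!i))} = e"
    using assms(2) unfolding stackedX_def by blast
  hence "w \<notin> cs_verts T st i" "e \<in> cs_edges T st i"
    using assms(1) by (auto simp: valid_cs_def)
  thus ?thesis
    using that i(1) by blast
qed

lemma stackedX_vertex: "w \<in> stackedX st e \<Longrightarrow> w \<in> tree_verts T st"
  by (cases T) (auto simp: stackedX_def cs_verts_def)

lemma stackedX_edge: "w \<in> stackedX st e \<Longrightarrow> u \<in> e \<Longrightarrow> {w, u} \<in> tree_edges T st"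
  by (cases T) (auto simp: stackedX_def cs_edges_def)

lemma stackedX_over_stacked_edge_fresh:
  assumes cs: "valid_cs T st" and x: "x \<in> stackedX st {a, b}" and z: "z \<in> stackedX st {x, c}"
  shows "z \<noteq> a" "z \<noteq> b"
proof -
  obtain i where i: "i < length st" "x \<notin> cs_verts T st i" "{a, b} \<in> cs_edges T st i"
    by (rule stackedX_step[OF cs x])
  obtain k where k: "k < length st" "z \<notin> cs_verts T st k" "{x, c} \<in> cs_edges T st k"
    by (rule stackedX_step[OF cs z])
  have "x \<in> cs_verts T st k"
    using cs_edge_endpoints[OF cs _ k(3)] k(1) by (auto simp: doubleton_eq_iff)
  hence "i < k"
    using i(2) cs_verts_mono[of k i T st] by (meson not_less subsetD)
  moreover have "a \<in> cs_verts T st i" "b \<in> cs_verts T st i"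
    using cs_edge_endpoints[OF cs _ i(3)] i(1) by (auto simp: doubleton_eq_iff)
  ultimately show "z \<noteq> a" "z \<noteq> b"
    using k(2) cs_verts_mono[of i k T st] by auto
qed

section \<open>Stacked vertices in a one-sided drawing\<close>

locale stacking_drawing =
  one_sided_drawing "tree_verts T st" "tree_edges T st \<union> cycle_edges v n" p \<gamma> v n
  for T :: "'v \<times> 'v \<times> 'v" and st p \<gamma> v n +
  assumes valid: "valid_cs T st"
begin

lemma obtain_idx_less_pair:
  assumes "S \<subseteq> tree_verts T st" "2 \<le> card S"
  obtains u w where "u \<in> S" "w \<in> S" "idx u < idx w"
proof -
  have "S \<noteq> {}"
    using assms(2) by auto
  then obtain u where u: "u \<in> S"
    by blast
  have "\<not> S \<subseteq> {u}"
    using card_mono[of "{u}" S] assms(2) by auto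
  then obtain w where w: "w \<in> S" "w \<noteq> u"
    by blast
  hence "idx u < idx w \<or> idx w < idx u"
    using idx_eq_iff u assms(1) by (metis linorder_neqE_nat subsetD)
  thus ?thesis
    using that u w by blast
qed

lemma XL_neighbour:
  assumes "w \<in> XL st v n {x, c}"
  shows "w \<in> tree_verts T st" "idx w < idx x" "idx w < idx c"
    "{w, x} \<in> tree_edges T st \<union> cycle_edges v n" "{w, c} \<in> tree_edges T st \<union> cycle_edges v n"
proof -
  have w: "w \<in> stackedX st {x, c}" "idx w < idx x" "idx w < idx c"
    using assms unfolding XL_def by auto
  thus "w \<in> tree_verts T st" "idx w < idx x" "idx w < idx c"
    "{w, x} \<in> tree_edges T st \<union> cycle_edges v n" "{w, c} \<in> tree_edges T st \<union> cycle_edges v n"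
    using stackedX_vertex[OF w(1)] stackedX_edge[OF w(1)] by auto
qed

lemma XR_empty_over_later_stacking:
  assumes e: "{c, d} \<in> tree_edges T st" and x: "x \<in> XL st v n {c, d}"
    and y: "y \<in> XL st v n {c, d}" "idx y < idx x"
  shows "XR st v n {x, c} = {}"
proof (rule ccontr)
  assume "XR st v n {x, c} \<noteq> {}"
  then obtain z where z: "z \<in> stackedX st {x, c}" "idx c < idx z"
    unfolding XR_def by blast
  have x': "x \<in> XL st v n {d, c}" and y': "y \<in> XL st v n {d, c}"
    using x y by (simp_all add: insert_commute)
  have cd: "c \<noteq> d" "c \<in> tree_verts T st" "d \<in> tree_verts T st"
    using cs_edge_endpoints[OF valid _ e] by (auto simp: doubleton_eq_iff)
  have "z \<noteq> d"
    using stackedX_over_stacked_edge_fresh[OF valid _ z(1)] x unfolding XL_def by blast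
  moreover have "{x, z} \<in> tree_edges T st" "{c, z} \<in> tree_edges T st"
    using stackedX_edge[OF z(1)] by (auto simp: insert_commute)
  ultimately show False
    using two_stackings_no_right_neighbour[of c d x y z, OF cd(2,3) XL_neighbour(1)[OF x]
        XL_neighbour(1)[OF y(1)] stackedX_vertex[OF z(1)] y(2) XL_neighbour(2,3)[OF x] z(2) cd(1)]
      XL_neighbour(4,5)[OF x'] XL_neighbour(4,5)[OF y'] e
    by (simp add: insert_commute)
qed

lemma XL_card_le_1_over_later_stacking:
  assumes e: "{a, b} \<in> tree_edges T st" and x: "x \<in> XL st v n {a, b}"
    and y: "y \<in> XL st v n {a, b}" "idx y < idx x"
  shows "card (XL st v n {x, a}) \<le> 1 \<or> card (XL st v n {x, b}) \<le> 1"
proof (rule ccontr)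
  assume "\<not> ?thesis"
  hence card: "2 \<le> card (XL st v n {x, a})" "2 \<le> card (XL st v n {x, b})"
    by auto
  have sub: "XL st v n {x, c} \<subseteq> tree_verts T st" for c
    using XL_neighbour(1) by blast
  obtain z1 z2 where z: "z1 \<in> XL st v n {x, a}" "z2 \<in> XL st v n {x, a}" "idx z1 < idx z2"
    using sub card(1) by (rule obtain_idx_less_pair)
  obtain w1 w2 where w: "w1 \<in> XL st v n {x, b}" "w2 \<in> XL st v n {x, b}" "idx w1 < idx w2"
    using sub card(2) by (rule obtain_idx_less_pair)
  have x': "x \<in> XL st v n {b, a}" and y': "y \<in> XL st v n {b, a}"
    using x y by (simp_all add: insert_commute)
  have "a \<noteq> b" "a \<in> tree_verts T st" "b \<in> tree_verts T st"
    using cs_edge_endpoints[OF valid _ e] by (auto simp: doubleton_eq_iff)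
  thus False
    using two_stackings_no_two_left_pairs[of a b x y z1 z2 w1 w2,
        OF _ _ XL_neighbour(1)[OF x] XL_neighbour(1)[OF y(1)] XL_neighbour(1)[OF z(1)]
        XL_neighbour(1)[OF z(2)] XL_neighbour(1)[OF w(1)] XL_neighbour(1)[OF w(2)]
        y(2) XL_neighbour(2,3)[OF x] _ z(3) XL_neighbour(2)[OF z(2)] w(3) XL_neighbour(2)[OF w(2)]
        XL_neighbour(5)[OF y'] XL_neighbour(5)[OF y(1)] XL_neighbour(5)[OF x'] XL_neighbour(5)[OF x]
        XL_neighbour(4)[OF z(1)] XL_neighbour(5)[OF z(2)] XL_neighbour(4)[OF w(1)] XL_neighbour(5)[OF w(2)]]
    by blast
qed

end

theorem claim3:
  fixes T :: "'v \<times> 'v \<times> 'v" and st :: "('v \<times> 'v \<times> 'v) list"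
    and v :: "nat \<Rightarrow> 'v" and n :: nat
    and p :: "'v \<Rightarrow> complex" and \<gamma> :: "'v set \<Rightarrow> real \<Rightarrow> complex"
    and a b x :: 'v
  assumes cs: "valid_cs T st"
    and n: "n = card (tree_verts T st)"
    and ord: "bij_betw v {1..n} (tree_verts T st)"
    and emb: "plane_embedding (tree_verts T st) (tree_edges T st \<union> cycle_edges v n) p \<gamma>"
    and ham: "one_sided_ham (tree_verts T st) (tree_edges T st \<union> cycle_edges v n) p \<gamma> v n"
    and e: "{a, b} \<in> tree_edges T st"
    and XL2: "card (XL st v n {a, b}) \<ge> 2"
    and x: "x \<in> XL st v n {a, b}"
    and xmax: "\<forall>w \<in> XL st v n {a, b}. vidx v n w \<le> vidx v n x"
  shows "XR st v n {x, a} = {} \<and> XR st v n {x, b} = {} \<and>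
         (card (XL st v n {x, a}) \<le> 1 \<or> card (XL st v n {x, b}) \<le> 1)"
proof -
  interpret stacking_drawing T st p \<gamma> v n
    using cs emb ham by unfold_locales
  have "XL st v n {a, b} \<subseteq> tree_verts T st"
    using XL_neighbour(1)[of _ a b] by blast
  then obtain y w where "y \<in> XL st v n {a, b}" "w \<in> XL st v n {a, b}" "idx y < idx w"
    using XL2 by (rule obtain_idx_less_pair)
  hence y: "y \<in> XL st v n {a, b}" "idx y < idx x"
    using xmax by fastforce+
  show ?thesis
    using XR_empty_over_later_stacking[OF e x y] XL_card_le_1_over_later_stacking[OF e x y]
      XR_empty_over_later_stacking[of b a x y] e x y by (simp add: insert_commute)
qed

end
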